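(* Let $n,k$ be integers with $1\leq k\leq n-1$. Let $a\in\mathbb{Z}^n$ and $\alpha\in\mathbb{Z}$ be such that $ax\geq\alpha$ is a facet defining inequality of $Q(C_n^k)$ which is neither (a positive multiple of) a boolean facet nor (a positive multiple of) the rank constraint. Put $a^0=\min\{a_i:i\in\mathbb{Z}_n\}$ and $W=\{i\in\mathbb{Z}_n: a_i>a^0\}$, so that the inequality reads $\sum_{i\in W}a_ix_i+a^0\sum_{i\notin W}x_i\geq\alpha$. Then: 1. For every $i\in\mathbb{Z}_n$ there exist (a) a root $\tilde x$ with $i\in\tilde x$, (b) a root $\tilde x$ with $i\notin\tilde x$, and (c) a root $\tilde x$ with $|\tilde x\cap C^i|=2$. 2. Let $i\in W$ and let $\tilde x$ be a root with $i\in\tilde x$. (a) If there exists $j\neq i$ with $j\in\tilde x\cap C^{i-k+1}$, then $[i,j+k]_n\subseteq W$. (b) If there exists $j\neq i$ with $j\in \tilde x\cap C^i$, then $[j-k,i]_n\subseteq W$.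
   Context: $\mathbb{Z}_n=\{0,\dots,n-1\}$ with addition modulo $n$; $(a,b)_n$, $[a,b)_n$, $(a,b]_n$, $[a,b]_n$ denote the $\mathbb{Z}_n$-cyclic intervals of points between $a$ and $b$ (open/closed at the respective ends). For $i\in\mathbb{Z}_n$, $C^i=[i,i+k)_n$, and the circulant matrix $C_n^k$ is the $n\times n$ $0,1$ matrix whose $i$-th row is the incidence vector of $C^i$. A cover of $C_n^k$ is a vector $x\in\{0,1\}^n$ with $C_n^kx\geq\mathbf 1$; vectors in $\{0,1\}^n$ are identified with the subsets of $\mathbb{Z}_n$ they are the characteristic vectors of. $Q(C_n^k)$ is the convex hull of the covers of $C_n^k$. The boolean facets are $x_i\geq0$, $x_i\leq 1$ and $\sum_{j\in C^i}x_j\geq 1$ ($i\in\mathbb{Z}_n$); the rank constraint is $\sum_{i\in\mathbb{Z}_n}x_i\geq\lceil n/k\rceil$. A root of an inequality $ax\geq\alpha$ is a cover $\tilde x$ of $C_n^k$ with $a\tilde x=\alpha$. *)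

theory Defs
  imports Complex_Main
begin

text \<open>Indices of Z_n are represented by the integers 0,...,n-1; vectors in R^n
  by functions int => real (only the values on 0..n-1 matter).\<close>

definition Zn :: "int \<Rightarrow> int set" where
  "Zn n = {0..<n}"

definition cint :: "int \<Rightarrow> int \<Rightarrow> int \<Rightarrow> int set" where
  "cint n a b = {(a + t) mod n | t. 0 \<le> t \<and> t \<le> (b - a) mod n}"

definition Cset :: "int \<Rightarrow> int \<Rightarrow> int \<Rightarrow> int set" where
  "Cset n k i = {(i + t) mod n | t. 0 \<le> t \<and> t < k}"

definition is_cover :: "int \<Rightarrow> int \<Rightarrow> int set \<Rightarrow> bool" where
  "is_cover n k S \<longleftrightarrow> S \<subseteq> Zn n \<and> (\<forall>i\<in>Zn n. Cset n k i \<inter> S \<noteq> {})"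

definition charvec :: "int set \<Rightarrow> int \<Rightarrow> real" where
  "charvec S = (\<lambda>i. if i \<in> S then 1 else 0)"

text \<open>Q(C_n^k): convex hull of the characteristic vectors of the covers
  (the set of covers is finite, so convex combinations of all covers suffice).\<close>
definition Qpoly :: "int \<Rightarrow> int \<Rightarrow> (int \<Rightarrow> real) set" where
  "Qpoly n k = {x. \<exists>\<mu>::int set \<Rightarrow> real.
      (\<forall>S. \<mu> S \<ge> 0) \<and> (\<Sum>S\<in>{S. is_cover n k S}. \<mu> S) = 1 \<and>
      x = (\<lambda>i. \<Sum>S\<in>{S. is_cover n k S}. \<mu> S * charvec S i)}"

definition lhs :: "int \<Rightarrow> (int \<Rightarrow> int) \<Rightarrow> (int \<Rightarrow> real) \<Rightarrow> real" where
  "lhs n a x = (\<Sum>i\<in>Zn n. real_of_int (a i) * x i)"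

definition aff_indep :: "int \<Rightarrow> (int \<Rightarrow> real) set \<Rightarrow> bool" where
  "aff_indep n T \<longleftrightarrow> finite T \<and>
     (\<forall>c::(int \<Rightarrow> real) \<Rightarrow> real.
        (\<forall>i\<in>Zn n. (\<Sum>v\<in>T. c v * v i) = 0) \<and> (\<Sum>v\<in>T. c v) = 0 \<longrightarrow> (\<forall>v\<in>T. c v = 0))"

definition adim :: "int \<Rightarrow> (int \<Rightarrow> real) set \<Rightarrow> int" where
  "adim n P = (if P = {} then -1
     else Max {int (card T) - 1 | T. T \<subseteq> P \<and> aff_indep n T})"

definition facet_defining :: "int \<Rightarrow> int \<Rightarrow> (int \<Rightarrow> int) \<Rightarrow> int \<Rightarrow> bool" where
  "facet_defining n k a \<alpha> \<longleftrightarrow>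
     (\<forall>x\<in>Qpoly n k. lhs n a x \<ge> real_of_int \<alpha>) \<and>
     (let F = {x\<in>Qpoly n k. lhs n a x = real_of_int \<alpha>}
      in F \<noteq> {} \<and> adim n F = adim n (Qpoly n k) - 1)"

definition boolean_or_rank :: "int \<Rightarrow> int \<Rightarrow> (int \<Rightarrow> int) \<Rightarrow> int \<Rightarrow> bool" where
  "boolean_or_rank n k a \<alpha> \<longleftrightarrow> (\<exists>t::real. t > 0 \<and>
     ((\<exists>i\<in>Zn n. (\<forall>j\<in>Zn n. real_of_int (a j) = t * (if j = i then 1 else 0)) \<and> real_of_int \<alpha> = 0)
    \<or> (\<exists>i\<in>Zn n. (\<forall>j\<in>Zn n. real_of_int (a j) = t * (if j = i then -1 else 0)) \<and> real_of_int \<alpha> = - t)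
    \<or> (\<exists>i\<in>Zn n. (\<forall>j\<in>Zn n. real_of_int (a j) = t * (if j \<in> Cset n k i then 1 else 0)) \<and> real_of_int \<alpha> = t)
    \<or> ((\<forall>j\<in>Zn n. real_of_int (a j) = t) \<and> real_of_int \<alpha> = t * real_of_int \<lceil>real_of_int n / real_of_int k\<rceil>)))"

definition is_root :: "int \<Rightarrow> int \<Rightarrow> (int \<Rightarrow> int) \<Rightarrow> int \<Rightarrow> int set \<Rightarrow> bool" where
  "is_root n k a \<alpha> S \<longleftrightarrow> is_cover n k S \<and> (\<Sum>j\<in>S. a j) = \<alpha>"

end

theory Submission
  imports Defs
begin

text \<open>For \<open>k \<ge> 2\<close> the polytope \<open>Q(C_n^k)\<close> is full-dimensional (for \<open>k = 1\<close> it is a single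
  point and has no facets), so a facet is determined by its roots up to a positive factor: if all
  roots satisfy \<open>b x = \<beta>\<close> and some cover satisfies \<open>b x > \<beta>\<close>, then \<open>(a, \<alpha>)\<close> is a positive
  multiple of \<open>(b, \<beta>)\<close>. Applied to \<open>x\<^sub>i \<ge> 0\<close>, \<open>x\<^sub>i \<le> 1\<close> and the window inequality of \<open>C\<^sup>i\<close>, this
  yields roots containing \<open>i\<close>, roots avoiding \<open>i\<close>, and roots meeting \<open>C\<^sup>i\<close> at least twice.
  Adding a point to a root gives a cover, so \<open>a \<ge> 0\<close>. Hence deleting a redundant point of a root
  gives another root, which brings \<open>|x \<inter> C\<^sup>i|\<close> down to 2; and replacing \<open>i\<close> in a root by a point
  \<open>x\<close> that keeps every window through \<open>i\<close> covered gives a cover, so \<open>a\<^sub>i \<le> a\<^sub>x\<close>. Every point of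
  the intervals in part 2 is such an exchange point.\<close>

section \<open>Cyclic intervals\<close>

lemma finite_Zn [simp]: "finite (Zn n)"
  by (simp add: Zn_def)

lemma card_Zn: "card (Zn n) = nat n"
  by (simp add: Zn_def)

lemma mod_diff_split:
  fixes n x y s :: int
  assumes "0 < n"
  shows "(x - s) mod n = (let d = (x - y) mod n + (y - s) mod n in if d < n then d else d - n)"
proof -
  define d where "d = (x - y) mod n + (y - s) mod n"
  have "0 \<le> (x - y) mod n" "(x - y) mod n < n" "0 \<le> (y - s) mod n" "(y - s) mod n < n"
    using assms by simp_all
  then have "0 \<le> d" "d < 2 * n" unfolding d_def by linarith+
  moreover have "(x - s) mod n = d mod n" unfolding d_def
    by (metis add_diff_eq diff_add_cancel mod_add_eq)
  moreover have "d mod n = (d - n) mod n" by (simp add: mod_diff_right_eq[symmetric])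
  ultimately show ?thesis unfolding d_def[symmetric] Let_def
    by (smt (verit) mod_pos_pos_trivial)
qed

lemma mod_diff_swap:
  fixes n x y :: int
  assumes "0 < n" "(x - y) mod n \<noteq> 0"
  shows "(y - x) mod n = n - (x - y) mod n"
  using assms zmod_zminus1_eq_if[of "x - y" n] by simp

lemma mod_diff_Zn_neq_0:
  assumes "x \<in> Zn n" "y \<in> Zn n" "x \<noteq> y"
  shows "(x - y) mod n \<noteq> 0"
  using assms by (simp add: Zn_def mod_eq_0_iff_dvd mod_eq_dvd_iff[symmetric])

lemma inj_on_mod_diff: "inj_on (\<lambda>x. (x - s) mod n) (Zn n)"
proof (rule inj_onI)
  fix x y assume "x \<in> Zn n" "y \<in> Zn n" "(x - s) mod n = (y - s) mod n"
  then have "x mod n = y mod n" by (metis diff_add_cancel mod_add_left_eq)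
  then show "x = y" using \<open>x \<in> Zn n\<close> \<open>y \<in> Zn n\<close> by (simp add: Zn_def)
qed

lemma Cset_mem:
  assumes "0 < n" "k \<le> n"
  shows "x \<in> Cset n k s \<longleftrightarrow> x \<in> Zn n \<and> (x - s) mod n < k"
proof
  assume "x \<in> Cset n k s"
  then obtain t where t: "x = (s + t) mod n" "0 \<le> t" "t < k" unfolding Cset_def by blast
  then have "(x - s) mod n = t" using assms by (simp add: mod_diff_left_eq)
  then show "x \<in> Zn n \<and> (x - s) mod n < k" using t assms by (simp add: Zn_def)
next
  assume x: "x \<in> Zn n \<and> (x - s) mod n < k"
  then have "x = (s + (x - s) mod n) mod n" by (simp add: mod_add_right_eq Zn_def)
  then show "x \<in> Cset n k s" unfolding Cset_def using x assms by auto
qed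

lemma card_Cset:
  assumes "0 < n" "0 \<le> k" "k \<le> n"
  shows "card (Cset n k s) = nat k"
proof -
  have "Cset n k s = (\<lambda>t. (s + t) mod n) ` {0..<k}" unfolding Cset_def by auto
  moreover have "inj_on (\<lambda>t. (s + t) mod n) {0..<k}"
    by (rule inj_on_inverseI[where g = "\<lambda>x. (x - s) mod n"]) (use assms in \<open>auto simp: mod_diff_left_eq\<close>)
  ultimately show ?thesis by (simp add: card_image)
qed

lemma cint_mem:
  assumes "0 < n"
  shows "x \<in> cint n a b \<longleftrightarrow> x \<in> Zn n \<and> (x - a) mod n \<le> (b - a) mod n"
proof
  assume "x \<in> cint n a b"
  then obtain t where t: "x = (a + t) mod n" "0 \<le> t" "t \<le> (b - a) mod n" unfolding cint_def by blast
  moreover have "t < n" using t(3) assms by (smt (verit) pos_mod_bound)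
  ultimately have "(x - a) mod n = t" by (simp add: mod_diff_left_eq)
  then show "x \<in> Zn n \<and> (x - a) mod n \<le> (b - a) mod n" using t assms by (simp add: Zn_def)
next
  assume x: "x \<in> Zn n \<and> (x - a) mod n \<le> (b - a) mod n"
  then have "x = (a + (x - a) mod n) mod n" by (simp add: mod_add_right_eq Zn_def)
  then show "x \<in> cint n a b" unfolding cint_def using x assms by auto
qed

lemma Cset_between:
  assumes "0 < n" "k \<le> n"
    and "(p1 - i) mod n < (p2 - i) mod n" "(p2 - i) mod n < (p3 - i) mod n"
    and "p1 \<in> Zn n" "p3 \<in> Cset n k i" "p2 \<in> Cset n k s"
  shows "p1 \<in> Cset n k s \<or> p3 \<in> Cset n k s"
  using assms mod_diff_split[OF assms(1), of p1 s i] mod_diff_split[OF assms(1), of p2 s i]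
    mod_diff_split[OF assms(1), of p3 s i] pos_mod_sign[OF assms(1), of "p1 - i"]
    pos_mod_bound[OF assms(1), of "i - s"]
  by (auto simp: Cset_mem Let_def simp del: pos_mod_bound pos_mod_sign split: if_splits)

lemma Cset_exchange_right:
  assumes n: "0 < n" "1 \<le> k" "k < n" and ij: "i \<in> Zn n" "j \<in> Zn n" "j \<noteq> i"
    and j: "j \<in> Cset n k ((i - k + 1) mod n)" and x: "x \<in> cint n i ((j + k) mod n)"
    and "i \<in> Cset n k s"
  shows "j \<in> Cset n k s \<or> x \<in> Cset n k s"
proof -
  have "(j - i) mod n \<noteq> 0" using ij by (simp add: mod_diff_Zn_neq_0)
  moreover have "(j - (i - (k - 1))) mod n < k"
    using j n by (simp add: Cset_mem mod_diff_right_eq algebra_simps)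
  moreover have "(x - i) mod n \<le> (j - (i - k)) mod n"
    using x n by (simp add: cint_mem mod_diff_left_eq algebra_simps)
  ultimately show ?thesis
    using assms mod_diff_split[OF n(1), of j "i - (k - 1)" i] mod_diff_split[OF n(1), of j "i - k" i]
      mod_diff_split[OF n(1), of j s i] mod_diff_split[OF n(1), of x s i]
      pos_mod_sign[OF n(1), of "j - i"] pos_mod_sign[OF n(1), of "x - i"]
      pos_mod_bound[OF n(1), of "j - i"] pos_mod_bound[OF n(1), of "x - i"]
    by (auto simp: Cset_mem cint_mem Let_def simp del: pos_mod_bound pos_mod_sign split: if_splits)
qed

lemma Cset_exchange_left:
  assumes n: "0 < n" "k < n" and ij: "i \<in> Zn n" "j \<in> Zn n" "j \<noteq> i"
    and j: "j \<in> Cset n k i" and x: "x \<in> cint n ((j - k) mod n) i"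
    and "i \<in> Cset n k s"
  shows "j \<in> Cset n k s \<or> x \<in> Cset n k s"
proof -
  have "(j - i) mod n \<noteq> 0" using ij by (simp add: mod_diff_Zn_neq_0)
  moreover have "(x - (j - k)) mod n \<le> (i - (j - k)) mod n"
    using x n by (simp add: cint_mem mod_diff_right_eq)
  ultimately show ?thesis
    using assms mod_diff_split[OF n(1), of x "j - k" i] mod_diff_split[OF n(1), of i "j - k" j]
      mod_diff_swap[OF n(1), of j i]
      mod_diff_split[OF n(1), of j s i] mod_diff_split[OF n(1), of x s i]
      pos_mod_sign[OF n(1), of "j - i"] pos_mod_sign[OF n(1), of "x - i"]
      pos_mod_bound[OF n(1), of "j - i"] pos_mod_bound[OF n(1), of "x - i"]
    by (auto simp: Cset_mem cint_mem Let_def simp del: pos_mod_bound pos_mod_sign split: if_splits)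
qed

section \<open>Affine independence\<close>

lemma homogeneous_system_nontrivial_solution:
  fixes f :: "'v \<Rightarrow> 'i \<Rightarrow> real"
  assumes "finite I" "finite V" "card I < card V"
  shows "\<exists>c. (\<exists>v\<in>V. c v \<noteq> 0) \<and> (\<forall>i\<in>I. (\<Sum>v\<in>V. c v * f v i) = 0)"
  using assms
proof (induction I arbitrary: V f rule: finite_induct)
  case empty
  then obtain v where "v \<in> V" by fastforce
  then show ?case by (intro exI[of _ "\<lambda>w. if w = v then 1 else 0"]) auto
next
  case (insert i0 I)
  show ?case
  proof (cases "\<forall>v\<in>V. f v i0 = 0")
    case True
    then show ?thesis using insert.IH[of V f] insert.prems insert.hyps by auto
  next
    case False
    then obtain v0 where v0: "v0 \<in> V" "f v0 i0 \<noteq> 0" by blast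
    text \<open>Eliminate coordinate \<open>i0\<close> with \<open>v0\<close>, solve the smaller system on \<open>V - {v0}\<close>,
      and choose the coefficient of \<open>v0\<close> to restore coordinate \<open>i0\<close>.\<close>
    define V' where "V' = V - {v0}"
    define g where "g = (\<lambda>v i. f v i - f v i0 / f v0 i0 * f v0 i)"
    have "card I < card V'" "finite V'"
      using v0 insert.prems insert.hyps unfolding V'_def by auto
    then obtain c' where c': "\<exists>v\<in>V'. c' v \<noteq> 0" "\<forall>i\<in>I. (\<Sum>v\<in>V'. c' v * g v i) = 0"
      using insert.IH[of V' g] by blast
    define \<sigma> where "\<sigma> = (\<Sum>w\<in>V'. c' w * f w i0)"
    define c where "c = (\<lambda>v. if v = v0 then - \<sigma> / f v0 i0 else c' v)"
    have split: "(\<Sum>v\<in>V. c v * f v i) = c v0 * f v0 i + (\<Sum>v\<in>V'. c' v * f v i)" for i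
    proof -
      have "(\<Sum>v\<in>V. c v * f v i) = c v0 * f v0 i + (\<Sum>v\<in>V'. c v * f v i)"
        unfolding V'_def using v0 insert.prems by (simp add: sum.remove)
      also have "(\<Sum>v\<in>V'. c v * f v i) = (\<Sum>v\<in>V'. c' v * f v i)"
        by (rule sum.cong) (auto simp: c_def V'_def)
      finally show ?thesis .
    qed
    have "(\<Sum>v\<in>V. c v * f v i) = 0" if i: "i \<in> I" for i
    proof -
      have "(\<Sum>v\<in>V'. c' v * f v i) = (\<Sum>v\<in>V'. c' v * g v i + c' v * f v i0 * (f v0 i / f v0 i0))"
        by (rule sum.cong) (auto simp: g_def algebra_simps)
      also have "\<dots> = \<sigma> * (f v0 i / f v0 i0)"
        using c'(2) i unfolding \<sigma>_def by (simp add: sum.distrib sum_distrib_right sum_divide_distrib)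
      finally show ?thesis using split[of i] by (simp add: c_def)
    qed
    moreover have "(\<Sum>v\<in>V. c v * f v i0) = 0"
      using split[of i0] v0(2) by (simp add: c_def \<sigma>_def)
    moreover have "\<exists>v\<in>V. c v \<noteq> 0" using c'(1) unfolding c_def V'_def by auto
    ultimately show ?thesis by auto
  qed
qed

lemma aff_indep_card_le:
  assumes "aff_indep n T"
  shows "card T \<le> nat n + 1"
proof (rule ccontr)
  assume "\<not> ?thesis"
  then have lt: "card (insert None (Some ` Zn n)) < card T"
    by (simp add: card_insert_if card_image card_Zn)
  define lift where "lift = (\<lambda>(v::int\<Rightarrow>real) j. case j of Some i \<Rightarrow> v i | None \<Rightarrow> 1)"
  have "finite T" using assms unfolding aff_indep_def by simp
  then obtain c where c: "\<exists>v\<in>T. c v \<noteq> 0"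
      "\<forall>j\<in>insert None (Some ` Zn n). (\<Sum>v\<in>T. c v * lift v j) = 0"
    using homogeneous_system_nontrivial_solution[OF _ _ lt, of lift] by auto
  then have "\<forall>i\<in>Zn n. (\<Sum>v\<in>T. c v * v i) = 0" "(\<Sum>v\<in>T. c v) = 0"
    by (auto simp: lift_def)
  then show False using assms c(1) unfolding aff_indep_def by blast
qed

lemma aff_indep_insert:
  assumes indep: "aff_indep n T"
    and zero: "\<forall>v\<in>T. (\<Sum>i\<in>Zn n. w i * v i) + w0 = 0"
    and nonzero: "(\<Sum>i\<in>Zn n. w i * p i) + w0 \<noteq> 0"
  shows "aff_indep n (insert p T)"
  unfolding aff_indep_def
proof (intro conjI allI impI)
  have T: "finite T" "p \<notin> T" using indep zero nonzero by (auto simp: aff_indep_def)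
  then show "finite (insert p T)" by simp
  fix c :: "(int \<Rightarrow> real) \<Rightarrow> real"
  assume c: "(\<forall>i\<in>Zn n. (\<Sum>v\<in>insert p T. c v * v i) = 0) \<and> (\<Sum>v\<in>insert p T. c v) = 0"
  define \<phi> where "\<phi> = (\<lambda>v. (\<Sum>i\<in>Zn n. w i * v i) + w0)"
  have "(\<Sum>v\<in>insert p T. c v * \<phi> v)
      = (\<Sum>i\<in>Zn n. w i * (\<Sum>v\<in>insert p T. c v * v i)) + w0 * (\<Sum>v\<in>insert p T. c v)"
    unfolding \<phi>_def by (simp add: algebra_simps sum.distrib sum_distrib_left sum.swap[of _ "Zn n"])
  also have "\<dots> = 0" using c by simp
  finally have "c p = 0" using T zero nonzero by (simp add: \<phi>_def)
  moreover have "\<forall>v\<in>T. c v = 0"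
    using indep c T \<open>c p = 0\<close> unfolding aff_indep_def by auto
  ultimately show "\<forall>v\<in>insert p T. c v = 0" by simp
qed

text \<open>Lift the points to \<open>(v, 1)\<close> and add \<open>(h, h0)\<close> as an extra vector: the resulting
  dependency expresses \<open>(h, h0)\<close> as a combination of lifted points, to which it is orthogonal,
  so \<open>(h, h0)\<close> has norm zero.\<close>
lemma aff_indep_affine_functional_zero:
  assumes indep: "aff_indep n T" and card: "card T = nat n + 1"
    and vanish: "\<forall>v\<in>T. (\<Sum>i\<in>Zn n. h i * v i) + h0 = 0"
  shows "(\<forall>i\<in>Zn n. h i = 0) \<and> h0 = 0"
proof -
  have T: "finite T" using indep unfolding aff_indep_def by simp
  define lift where "lift = (\<lambda>w j. case w of
      Some v \<Rightarrow> (case j of Some i \<Rightarrow> v i | None \<Rightarrow> 1)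
    | None \<Rightarrow> (case j of Some i \<Rightarrow> h i | None \<Rightarrow> h0))"
  define V where "V = insert None (Some ` T)"
  have lt: "card (insert None (Some ` Zn n)) < card V"
    using card T by (simp add: V_def card_insert_if card_image card_Zn)
  obtain c where c: "\<exists>v\<in>V. c v \<noteq> 0"
      "\<forall>j\<in>insert None (Some ` Zn n). (\<Sum>v\<in>V. c v * lift v j) = 0"
    using homogeneous_system_nontrivial_solution[OF _ _ lt, of lift] T by (auto simp: V_def)
  define d where "d = (\<lambda>v. c (Some v))"
  have sumV: "(\<Sum>v\<in>V. c v * lift v j) = c None * lift None j + (\<Sum>v\<in>T. d v * lift (Some v) j)" for j
    using T by (simp add: V_def sum.reindex d_def)
  have coord: "\<forall>i\<in>Zn n. c None * h i + (\<Sum>v\<in>T. d v * v i) = 0"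
    using c(2) sumV by (auto simp: lift_def)
  have const: "c None * h0 + (\<Sum>v\<in>T. d v) = 0"
    using c(2) sumV[of None] by (auto simp: lift_def)
  have "c None \<noteq> 0"
  proof
    assume "c None = 0"
    moreover from this have "\<forall>v\<in>T. d v = 0"
      using indep coord const unfolding aff_indep_def by auto
    ultimately show False using c(1) by (auto simp: V_def d_def)
  qed
  have "c None * ((\<Sum>i\<in>Zn n. h i * h i) + h0 * h0)
      = (\<Sum>i\<in>Zn n. h i * (c None * h i)) + h0 * (c None * h0)"
    by (simp add: algebra_simps sum_distrib_left)
  also have "\<dots> = (\<Sum>i\<in>Zn n. h i * - (\<Sum>v\<in>T. d v * v i)) + h0 * - (\<Sum>v\<in>T. d v)"
    using coord const by (smt (verit) sum.cong)
  also have "\<dots> = - (\<Sum>v\<in>T. d v * ((\<Sum>i\<in>Zn n. h i * v i) + h0))"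
    by (simp add: sum_distrib_left sum_distrib_right algebra_simps sum_negf sum.distrib
        sum.swap[of _ "Zn n" T])
  also have "\<dots> = 0" using vanish by simp
  finally have "(\<Sum>i\<in>Zn n. h i * h i) + h0 * h0 = 0" using \<open>c None \<noteq> 0\<close> by simp
  moreover have "(\<Sum>i\<in>Zn n. h i * h i) \<ge> 0" by (simp add: sum_nonneg)
  ultimately have "(\<Sum>i\<in>Zn n. h i * h i) = 0" "h0 * h0 = 0"
    by (smt (verit) zero_le_square)+
  then show ?thesis by (simp add: sum_nonneg_eq_0_iff)
qed

text \<open>The combination \<open>(lhs b p - \<beta>) (a, \<alpha>) - (lhs a p - \<alpha>) (b, \<beta>)\<close> vanishes on the
  \<open>n + 1\<close> affinely independent points \<open>T \<union> {p}\<close>, hence it is zero.\<close>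
lemma aff_indep_affine_functionals_proportional:
  assumes indep: "aff_indep n T" and card: "card T = nat n"
    and onT: "\<forall>v\<in>T. lhs n a v = real_of_int \<alpha> \<and> lhs n b v = real_of_int \<beta>"
    and p: "lhs n b p \<noteq> real_of_int \<beta>"
  defines "t \<equiv> (lhs n a p - real_of_int \<alpha>) / (lhs n b p - real_of_int \<beta>)"
  shows "(\<forall>j\<in>Zn n. real_of_int (a j) = t * real_of_int (b j)) \<and> real_of_int \<alpha> = t * real_of_int \<beta>"
proof -
  define fp where "fp = lhs n b p - real_of_int \<beta>"
  define gp where "gp = lhs n a p - real_of_int \<alpha>"
  have indep': "aff_indep n (insert p T)"
  proof (rule aff_indep_insert[OF indep, of "\<lambda>i. real_of_int (b i)" "- real_of_int \<beta>"])
    show "\<forall>v\<in>T. (\<Sum>i\<in>Zn n. real_of_int (b i) * v i) + - real_of_int \<beta> = 0"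
      using onT by (simp add: lhs_def)
    show "(\<Sum>i\<in>Zn n. real_of_int (b i) * p i) + - real_of_int \<beta> \<noteq> 0"
      using p by (simp add: lhs_def)
  qed
  have "p \<notin> T" using onT p by auto
  then have card': "card (insert p T) = nat n + 1" using indep card by (simp add: aff_indep_def)
  define h where "h = (\<lambda>i. fp * real_of_int (a i) - gp * real_of_int (b i))"
  define h0 where "h0 = gp * real_of_int \<beta> - fp * real_of_int \<alpha>"
  have h: "(\<Sum>i\<in>Zn n. h i * v i) + h0
      = fp * (lhs n a v - real_of_int \<alpha>) - gp * (lhs n b v - real_of_int \<beta>)" for v
    unfolding h_def h0_def lhs_def by (simp add: algebra_simps sum_subtractf sum_distrib_left)
  have "\<forall>v\<in>insert p T. (\<Sum>i\<in>Zn n. h i * v i) + h0 = 0"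
    unfolding h using onT by (simp add: fp_def gp_def)
  then have "(\<forall>i\<in>Zn n. h i = 0) \<and> h0 = 0"
    by (rule aff_indep_affine_functional_zero[OF indep' card'])
  moreover have "fp \<noteq> 0" using p by (simp add: fp_def)
  ultimately show ?thesis by (auto simp: t_def h_def h0_def fp_def[symmetric] gp_def[symmetric] field_simps)
qed

section \<open>Covers and the polytope\<close>

lemma lhs_charvec:
  assumes "S \<subseteq> Zn n"
  shows "lhs n b (charvec S) = real_of_int (\<Sum>j\<in>S. b j)"
proof -
  have "lhs n b (charvec S) = (\<Sum>i\<in>Zn n. if i \<in> S then real_of_int (b i) else 0)"
    unfolding lhs_def charvec_def by (rule sum.cong) auto
  also have "\<dots> = (\<Sum>i\<in>Zn n \<inter> S. real_of_int (b i))"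
    by (simp add: sum.inter_restrict)
  also have "Zn n \<inter> S = S" using assms by blast
  finally show ?thesis by simp
qed

lemma lhs_sum_charvec:
  "lhs n b (\<lambda>i. \<Sum>S\<in>A. \<mu> S * charvec S i) = (\<Sum>S\<in>A. \<mu> S * lhs n b (charvec S))"
  unfolding lhs_def by (simp add: sum_distrib_left sum.swap[of _ A] algebra_simps)

lemma finite_covers: "finite {S. is_cover n k S}"
  by (rule finite_subset[of _ "Pow (Zn n)"]) (auto simp: is_cover_def)

lemma charvec_in_Qpoly:
  assumes "is_cover n k S"
  shows "charvec S \<in> Qpoly n k"
proof -
  define \<mu> where "\<mu> = (\<lambda>T::int set. if T = S then (1::real) else 0)"
  have "(\<Sum>T\<in>{S. is_cover n k S}. \<mu> T * charvec T i) = charvec S i" for i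
  proof -
    have "(\<Sum>T\<in>{S. is_cover n k S}. \<mu> T * charvec T i)
        = (\<Sum>T\<in>{S. is_cover n k S}. if T = S then charvec S i else 0)"
      by (rule sum.cong) (auto simp: \<mu>_def)
    also have "\<dots> = charvec S i" using assms finite_covers[of n k] by (simp add: sum.delta)
    finally show ?thesis .
  qed
  moreover have "(\<Sum>T\<in>{S. is_cover n k S}. \<mu> T) = 1"
    using assms finite_covers[of n k] by (simp add: \<mu>_def sum.delta)
  ultimately show ?thesis unfolding Qpoly_def by (intro CollectI exI[of _ \<mu>]) (auto simp: \<mu>_def)
qed

lemma is_cover_Zn:
  assumes "1 \<le> k" "k \<le> n"
  shows "is_cover n k (Zn n)"
  unfolding is_cover_def
proof (intro conjI ballI)
  fix i assume "i \<in> Zn n"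
  then have "i \<in> Cset n k i" using assms by (simp add: Cset_mem)
  then show "Cset n k i \<inter> Zn n \<noteq> {}" using \<open>i \<in> Zn n\<close> by blast
qed simp

lemma is_cover_Zn_minus:
  assumes "2 \<le> k" "k \<le> n"
  shows "is_cover n k (Zn n - {j})"
  unfolding is_cover_def
proof (intro conjI ballI)
  fix i assume i: "i \<in> Zn n"
  have n: "0 < n" "1 < n" using assms by auto
  have "(i + 1) mod n \<in> Cset n k i" "i \<in> Cset n k i"
    using assms i n by (simp_all add: Cset_mem Zn_def mod_diff_left_eq)
  moreover have "((i + 1) mod n - i) mod n = 1"
    using n by (simp add: mod_diff_left_eq)
  then have "(i + 1) mod n \<noteq> i" by auto
  ultimately show "Cset n k i \<inter> (Zn n - {j}) \<noteq> {}"
    using Cset_mem[OF n(1) assms(2)] by (metis Diff_iff IntI empty_iff singletonD)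
qed auto

lemma is_cover_replace:
  assumes S: "is_cover n k S" and S': "S' \<subseteq> Zn n" "S - {p} \<subseteq> S'"
    and p: "\<forall>s\<in>Zn n. p \<in> Cset n k s \<longrightarrow> Cset n k s \<inter> S' \<noteq> {}"
  shows "is_cover n k S'"
  unfolding is_cover_def
proof (intro conjI ballI)
  fix s assume s: "s \<in> Zn n"
  then obtain y where "y \<in> Cset n k s" "y \<in> S" using S by (auto simp: is_cover_def)
  then show "Cset n k s \<inter> S' \<noteq> {}" using S' p s by (cases "y = p") auto
qed (rule S')

lemma cover_sum_ge:
  assumes valid: "\<forall>x\<in>Qpoly n k. real_of_int \<alpha> \<le> lhs n a x" and S: "is_cover n k S"
  shows "\<alpha> \<le> (\<Sum>j\<in>S. a j)"
proof -
  have "real_of_int \<alpha> \<le> real_of_int (\<Sum>j\<in>S. a j)"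
    using valid charvec_in_Qpoly[OF S] lhs_charvec[of S n a] S by (auto simp: is_cover_def)
  then show ?thesis by (simp only: of_int_le_iff)
qed

text \<open>A point of the face is a convex combination of covers; all covers carrying positive
  weight are roots, so any equation satisfied by all roots holds on the face.\<close>
lemma face_lhs_eq:
  assumes valid: "\<forall>x\<in>Qpoly n k. real_of_int \<alpha> \<le> lhs n a x"
    and x: "x \<in> Qpoly n k" "lhs n a x = real_of_int \<alpha>"
    and roots: "\<forall>S. is_root n k a \<alpha> S \<longrightarrow> (\<Sum>j\<in>S. b j) = \<beta>"
  shows "lhs n b x = real_of_int \<beta>"
proof -
  define Cv where "Cv = {S. is_cover n k S}"
  obtain \<mu> where \<mu>: "\<forall>S. \<mu> S \<ge> 0" "(\<Sum>S\<in>Cv. \<mu> S) = 1"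
    "x = (\<lambda>i. \<Sum>S\<in>Cv. \<mu> S * charvec S i)"
    using x(1) unfolding Qpoly_def Cv_def by blast
  have lhs_cover: "lhs n b (charvec S) = real_of_int (\<Sum>j\<in>S. b j)" if "S \<in> Cv" for S b
    using that lhs_charvec by (auto simp: Cv_def is_cover_def)
  have fin: "finite Cv" unfolding Cv_def by (rule finite_covers)
  have slack: "\<mu> S * (lhs n a (charvec S) - real_of_int \<alpha>) \<ge> 0" if "S \<in> Cv" for S
    using cover_sum_ge[OF valid] that \<mu>(1) lhs_cover[OF that]
    by (simp add: Cv_def del: of_int_sum)
  have "(\<Sum>S\<in>Cv. \<mu> S * (lhs n a (charvec S) - real_of_int \<alpha>)) = lhs n a x - real_of_int \<alpha>"
    using \<mu> by (simp add: lhs_sum_charvec algebra_simps sum_subtractf sum_distrib_left[symmetric])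
  also have "\<dots> = 0" using x(2) by simp
  finally have "\<forall>S\<in>Cv. \<mu> S * (lhs n a (charvec S) - real_of_int \<alpha>) = 0"
    using fin slack by (subst sum_nonneg_eq_0_iff[symmetric]) auto
  then have tight: "\<mu> S * (lhs n a (charvec S) - real_of_int \<alpha>) = 0" if "S \<in> Cv" for S
    using that by blast
  have "\<mu> S * (lhs n b (charvec S) - real_of_int \<beta>) = 0" if S: "S \<in> Cv" for S
  proof (cases "\<mu> S = 0")
    case False
    then have "(\<Sum>j\<in>S. a j) = \<alpha>" using tight[OF S] lhs_cover[OF S] by (simp del: of_int_sum)
    then show ?thesis using S roots lhs_cover[OF S] by (simp add: is_root_def Cv_def del: of_int_sum)
  qed simp
  then have "(\<Sum>S\<in>Cv. \<mu> S * (lhs n b (charvec S) - real_of_int \<beta>)) = 0"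
    by (intro sum.neutral) blast
  moreover have "(\<Sum>S\<in>Cv. \<mu> S * (lhs n b (charvec S) - real_of_int \<beta>)) = lhs n b x - real_of_int \<beta>"
    using \<mu> by (simp add: lhs_sum_charvec algebra_simps sum_subtractf sum_distrib_left[symmetric])
  ultimately show ?thesis by simp
qed

section \<open>Dimension and facets\<close>

lemma Qpoly_full_dim:
  assumes "2 \<le> k" "k \<le> n"
  shows "\<exists>T \<subseteq> Qpoly n k. aff_indep n T \<and> card T = nat n + 1"
proof -
  define P where "P = (\<lambda>j. charvec (Zn n - {j}))"
  define T where "T = insert (charvec (Zn n)) (P ` Zn n)"
  have P: "P j i = (if i \<in> Zn n \<and> i \<noteq> j then 1 else 0)" for i j
    by (simp add: P_def charvec_def)
  have all: "charvec (Zn n) i = (if i \<in> Zn n then 1 else 0)" for i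
    by (simp add: charvec_def)
  have inj: "inj_on P (Zn n)"
    by (rule inj_onI) (metis P one_neq_zero)
  have new: "charvec (Zn n) \<notin> P ` Zn n"
    using P all by (metis (no_types, lifting) imageE one_neq_zero)
  have sum_T: "(\<Sum>v\<in>T. g v) = g (charvec (Zn n)) + (\<Sum>j\<in>Zn n. g (P j))" for g
    using inj new by (simp add: T_def sum.reindex)
  have "T \<subseteq> Qpoly n k"
    unfolding T_def P_def using assms charvec_in_Qpoly is_cover_Zn is_cover_Zn_minus by auto
  moreover have "card T = nat n + 1"
    using inj new by (simp add: T_def card_image card_Zn)
  moreover have "aff_indep n T"
    unfolding aff_indep_def
  proof (intro conjI allI impI)
    show "finite T" by (simp add: T_def)
    fix c :: "(int \<Rightarrow> real) \<Rightarrow> real"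
    assume c: "(\<forall>i\<in>Zn n. (\<Sum>v\<in>T. c v * v i) = 0) \<and> (\<Sum>v\<in>T. c v) = 0"
    have cP: "c (P i) = 0" if i: "i \<in> Zn n" for i
    proof -
      have "(\<Sum>j\<in>Zn n. c (P j) * P j i) = (\<Sum>j\<in>Zn n. c (P j) - (if j = i then c (P j) else 0))"
        using i by (intro sum.cong) (auto simp: P)
      also have "\<dots> = (\<Sum>j\<in>Zn n. c (P j)) - c (P i)"
        using i by (simp add: sum_subtractf sum.delta)
      finally have "(\<Sum>j\<in>Zn n. c (P j) * P j i) = (\<Sum>j\<in>Zn n. c (P j)) - c (P i)" .
      then show ?thesis using c i sum_T[of "\<lambda>v. c v * v i"] sum_T[of c] by (simp add: all)
    qed
    then have "c (charvec (Zn n)) = 0" using c sum_T[of c] by simp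
    then show "\<forall>v\<in>T. c v = 0" using cP by (auto simp: T_def)
  qed
  ultimately show ?thesis by blast
qed

lemma finite_indep_dims:
  assumes "0 \<le> n"
  shows "finite {int (card T) - 1 | T. T \<subseteq> X \<and> aff_indep n T}"
  by (rule finite_subset[of _ "{-1..n}"]) (use assms aff_indep_card_le in force)+

lemma adim_obtain_indep:
  assumes "X \<noteq> {}" "0 \<le> n"
  obtains T where "T \<subseteq> X" "aff_indep n T" "int (card T) - 1 = adim n X"
proof -
  let ?D = "{int (card T) - 1 | T. T \<subseteq> X \<and> aff_indep n T}"
  have "-1 \<in> ?D" by (intro CollectI exI[of _ "{}"]) (simp add: aff_indep_def)
  then have "Max ?D \<in> ?D" using finite_indep_dims[OF assms(2)] by (intro Max_in) auto
  then obtain T where "T \<subseteq> X" "aff_indep n T" "int (card T) - 1 = Max ?D" by auto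
  then show ?thesis using that assms(1) by (simp add: adim_def)
qed

lemma adim_Qpoly:
  assumes "2 \<le> k" "k \<le> n"
  shows "adim n (Qpoly n k) = n"
proof -
  obtain T where T: "T \<subseteq> Qpoly n k" "aff_indep n T" "card T = nat n + 1"
    using Qpoly_full_dim[OF assms] by blast
  let ?D = "{int (card T) - 1 | T. T \<subseteq> Qpoly n k \<and> aff_indep n T}"
  have "n \<in> ?D" using T assms by (intro CollectI exI[of _ T]) auto
  moreover have "d \<le> n" if "d \<in> ?D" for d
    using that assms by (auto dest: aff_indep_card_le)
  ultimately have "Max ?D = n" using finite_indep_dims[of n] assms by (intro Max_eqI) auto
  moreover have "Qpoly n k \<noteq> {}" using T assms by auto
  ultimately show ?thesis by (simp add: adim_def)
qed

lemma facet_not_tight: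
  assumes "facet_defining n k a \<alpha>"
  shows "\<exists>x\<in>Qpoly n k. lhs n a x \<noteq> real_of_int \<alpha>"
proof (rule ccontr)
  assume "\<not> ?thesis"
  then have "{x\<in>Qpoly n k. lhs n a x = real_of_int \<alpha>} = Qpoly n k" by auto
  then show False using assms by (simp add: facet_defining_def)
qed

lemma facet_obtain_indep:
  assumes "2 \<le> k" "k \<le> n" "facet_defining n k a \<alpha>"
  obtains T where "T \<subseteq> Qpoly n k" "\<forall>v\<in>T. lhs n a v = real_of_int \<alpha>" "aff_indep n T"
    "card T = nat n"
proof -
  let ?F = "{x\<in>Qpoly n k. lhs n a x = real_of_int \<alpha>}"
  have "?F \<noteq> {}" "adim n ?F = n - 1"
    using assms adim_Qpoly[OF assms(1,2)] by (simp_all add: facet_defining_def)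
  then obtain T where "T \<subseteq> ?F" "aff_indep n T" "int (card T) - 1 = n - 1"
    using adim_obtain_indep[of ?F n] assms by auto
  then show ?thesis by (intro that[of T]) auto
qed

lemma facet_scalar_multiple:
  assumes k: "2 \<le> k" "k \<le> n" and facet: "facet_defining n k a \<alpha>"
    and P: "is_cover n k P" "\<beta> < (\<Sum>j\<in>P. b j)"
    and roots: "\<forall>S. is_root n k a \<alpha> S \<longrightarrow> (\<Sum>j\<in>S. b j) = \<beta>"
  shows "\<exists>t>0. (\<forall>j\<in>Zn n. real_of_int (a j) = t * real_of_int (b j))
    \<and> real_of_int \<alpha> = t * real_of_int \<beta>"
proof -
  have valid: "\<forall>x\<in>Qpoly n k. real_of_int \<alpha> \<le> lhs n a x"
    using facet by (simp add: facet_defining_def)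
  obtain T where T: "T \<subseteq> Qpoly n k" "\<forall>v\<in>T. lhs n a v = real_of_int \<alpha>" "aff_indep n T"
    "card T = nat n"
    using facet_obtain_indep[OF k facet] by blast
  have "lhs n b v = real_of_int \<beta>" if "v \<in> T" for v
    using face_lhs_eq[OF valid _ _ roots] T that by blast
  moreover define p where "p = charvec P"
  moreover have "lhs n b p > real_of_int \<beta>"
    using P lhs_charvec[of P n b] unfolding p_def by (simp add: is_cover_def del: of_int_sum)
  moreover have "lhs n a p \<ge> real_of_int \<alpha>" using valid charvec_in_Qpoly[OF P(1)] by (simp add: p_def)
  ultimately obtain t where t: "t \<ge> 0" "\<forall>j\<in>Zn n. real_of_int (a j) = t * real_of_int (b j)"
      "real_of_int \<alpha> = t * real_of_int \<beta>"
    using aff_indep_affine_functionals_proportional[OF T(3,4), of a \<alpha> b \<beta> p] T(2)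
    by (metis (no_types, lifting) diff_ge_0_iff_ge divide_nonneg_pos less_imp_neq diff_gt_0_iff_gt)
  have "t \<noteq> 0"
  proof
    assume "t = 0"
    then have "lhs n a x = real_of_int \<alpha>" for x using t by (simp add: lhs_def)
    then show False using facet_not_tight[OF facet] by blast
  qed
  then show ?thesis using t by (intro exI[of _ t]) auto
qed

lemma facet_defining_k_ge_2:
  assumes "1 \<le> k" "k \<le> n - 1" "facet_defining n k a \<alpha>"
  shows "2 \<le> k"
proof (rule ccontr)
  assume "\<not> 2 \<le> k"
  then have k: "k = 1" using assms(1) by simp
  have n: "0 < n" "k \<le> n" using assms by auto
  text \<open>For \<open>k = 1\<close> the only cover is \<open>Zn n\<close>, so \<open>Qpoly n k\<close> is a single point.\<close>
  have only_cover: "S = Zn n" if "is_cover n k S" for S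
  proof -
    have "i \<in> S" if i: "i \<in> Zn n" for i
    proof -
      obtain x where x: "x \<in> Cset n k i" "x \<in> S"
        using \<open>is_cover n k S\<close> i by (auto simp: is_cover_def)
      then have "x \<in> Zn n" "(x - i) mod n = 0"
        using Cset_mem[OF n, of x i] k pos_mod_sign[OF n(1), of "x - i"] by auto
      then show ?thesis using mod_diff_Zn_neq_0[of x n i] i x(2) by auto
    qed
    then show ?thesis using that by (auto simp: is_cover_def)
  qed
  moreover have "is_cover n k (Zn n)" using is_cover_Zn n k by simp
  ultimately have covers: "{S. is_cover n k S} = {Zn n}" by blast
  have "Qpoly n k \<subseteq> {charvec (Zn n)}"
  proof
    fix x assume "x \<in> Qpoly n k"
    then obtain \<mu> where "(\<Sum>S\<in>{S. is_cover n k S}. \<mu> S) = 1"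
        "x = (\<lambda>i. \<Sum>S\<in>{S. is_cover n k S}. \<mu> S * charvec S i)"
      unfolding Qpoly_def by blast
    then show "x \<in> {charvec (Zn n)}" unfolding covers by simp
  qed
  moreover obtain y where "y \<in> Qpoly n k" "lhs n a y = real_of_int \<alpha>"
    using assms(3) by (auto simp: facet_defining_def Let_def)
  moreover obtain x where "x \<in> Qpoly n k" "lhs n a x \<noteq> real_of_int \<alpha>"
    using facet_not_tight[OF assms(3)] by blast
  ultimately show False by auto
qed

section \<open>Roots of a nontrivial facet\<close>

lemma card_ge_3_obtain:
  fixes A :: "'a::linorder set"
  assumes "finite A" "3 \<le> card A"
  obtains x y z where "x \<in> A" "y \<in> A" "z \<in> A" "x < y" "y < z"
proof -
  have "A \<noteq> {}" using assms by auto
  then have "Min A \<in> A" "Max A \<in> A" using assms(1) by simp_all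
  moreover have "A - {Min A, Max A} \<noteq> {}"
  proof
    assume "A - {Min A, Max A} = {}"
    then have "card A \<le> card {Min A, Max A}" by (intro card_mono) auto
    also have "\<dots> \<le> 2" by (simp add: card_insert_if)
    finally show False using assms(2) by simp
  qed
  then obtain y where "y \<in> A" "y \<noteq> Min A" "y \<noteq> Max A" by blast
  moreover have "Min A \<le> y" "y \<le> Max A" using \<open>y \<in> A\<close> assms(1) by simp_all
  ultimately show ?thesis using that[of "Min A" y "Max A"] by auto
qed

locale nontrivial_cover_facet =
  fixes n k :: int and a :: "int \<Rightarrow> int" and \<alpha> :: int
  assumes k_ge_2: "2 \<le> k" and k_less: "k < n"
    and facet: "facet_defining n k a \<alpha>"
    and not_boolean_or_rank: "\<not> boolean_or_rank n k a \<alpha>"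
begin

lemma n_pos: "0 < n"
  using k_ge_2 k_less by simp

lemma facet_valid: "\<forall>x\<in>Qpoly n k. real_of_int \<alpha> \<le> lhs n a x"
  using facet by (simp add: facet_defining_def)

lemma root_cover: "is_root n k a \<alpha> S \<Longrightarrow> is_cover n k S"
  and root_sum: "is_root n k a \<alpha> S \<Longrightarrow> (\<Sum>j\<in>S. a j) = \<alpha>"
  and root_subset: "is_root n k a \<alpha> S \<Longrightarrow> S \<subseteq> Zn n"
  and root_finite: "is_root n k a \<alpha> S \<Longrightarrow> finite S"
  by (auto simp: is_root_def is_cover_def intro: finite_subset)

lemma cover_Zn: "is_cover n k (Zn n)"
  using is_cover_Zn k_ge_2 k_less by simp

lemma scalar_multiple:
  assumes "is_cover n k P" "\<beta> < (\<Sum>j\<in>P. b j)" "\<forall>S. is_root n k a \<alpha> S \<longrightarrow> (\<Sum>j\<in>S. b j) = \<beta>"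
  obtains t where "t > 0" "\<forall>j\<in>Zn n. real_of_int (a j) = t * real_of_int (b j)"
    "real_of_int \<alpha> = t * real_of_int \<beta>"
  using facet_scalar_multiple[OF k_ge_2 _ facet assms] k_less by auto

lemma exists_root_mem:
  assumes i: "i \<in> Zn n"
  shows "\<exists>S. is_root n k a \<alpha> S \<and> i \<in> S"
proof (rule ccontr)
  assume none: "\<not> ?thesis"
  define b where "b = (\<lambda>j::int. if j = i then 1 else 0 :: int)"
  have "0 < (\<Sum>j\<in>Zn n. b j)" using i by (simp add: b_def)
  moreover have "\<forall>S. is_root n k a \<alpha> S \<longrightarrow> (\<Sum>j\<in>S. b j) = 0"
    using none root_finite by (simp add: b_def sum.delta)
  ultimately obtain t where t: "t > 0" "\<forall>j\<in>Zn n. real_of_int (a j) = t * real_of_int (b j)"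
      "real_of_int \<alpha> = t * real_of_int 0"
    by (rule scalar_multiple[OF cover_Zn])
  then have "(\<forall>j\<in>Zn n. real_of_int (a j) = t * (if j = i then 1 else 0)) \<and> real_of_int \<alpha> = 0"
    by (simp add: b_def)
  then have "boolean_or_rank n k a \<alpha>"
    unfolding boolean_or_rank_def using t(1) i by blast
  then show False using not_boolean_or_rank by blast
qed

lemma exists_root_not_mem:
  assumes i: "i \<in> Zn n"
  shows "\<exists>S. is_root n k a \<alpha> S \<and> i \<notin> S"
proof (rule ccontr)
  assume all: "\<not> ?thesis"
  define b where "b = (\<lambda>j::int. if j = i then -1 else 0 :: int)"
  have "-1 < (\<Sum>j\<in>Zn n - {i}. b j)" by (simp add: b_def)
  moreover have "\<forall>S. is_root n k a \<alpha> S \<longrightarrow> (\<Sum>j\<in>S. b j) = -1"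
    using all root_finite by (auto simp: b_def sum.delta)
  ultimately obtain t where t: "t > 0" "\<forall>j\<in>Zn n. real_of_int (a j) = t * real_of_int (b j)"
      "real_of_int \<alpha> = t * real_of_int (-1)"
    by (rule scalar_multiple[OF is_cover_Zn_minus[OF k_ge_2 less_imp_le[OF k_less]]])
  then have "(\<forall>j\<in>Zn n. real_of_int (a j) = t * (if j = i then -1 else 0)) \<and> real_of_int \<alpha> = - t"
    by (simp add: b_def)
  then have "boolean_or_rank n k a \<alpha>"
    unfolding boolean_or_rank_def using t(1) i by blast
  then show False using not_boolean_or_rank by blast
qed

lemma exists_root_window_card_ge_2:
  assumes i: "i \<in> Zn n"
  shows "\<exists>S. is_root n k a \<alpha> S \<and> 2 \<le> card (S \<inter> Cset n k i)"
proof (rule ccontr)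
  assume none: "\<not> ?thesis"
  define b where "b = (\<lambda>j::int. if j \<in> Cset n k i then 1 else 0 :: int)"
  have card_window: "(\<Sum>j\<in>S. b j) = int (card (S \<inter> Cset n k i))" if "finite S" for S
    using that by (simp add: b_def sum.If_cases)
  have "Zn n \<inter> Cset n k i = Cset n k i"
    using Cset_mem[OF n_pos less_imp_le[OF k_less]] by blast
  moreover have "card (Cset n k i) = nat k"
    using card_Cset n_pos k_ge_2 k_less by simp
  ultimately have "1 < (\<Sum>j\<in>Zn n. b j)" using card_window[of "Zn n"] k_ge_2 by simp
  moreover have "\<forall>S. is_root n k a \<alpha> S \<longrightarrow> (\<Sum>j\<in>S. b j) = 1"
  proof (intro allI impI)
    fix S assume S: "is_root n k a \<alpha> S"
    have "S \<inter> Cset n k i \<noteq> {}" using root_cover[OF S] i by (auto simp: is_cover_def)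
    then have "card (S \<inter> Cset n k i) \<noteq> 0" using root_finite[OF S] by simp
    moreover have "card (S \<inter> Cset n k i) < 2" using none S by auto
    ultimately have "card (S \<inter> Cset n k i) = 1" by linarith
    then show "(\<Sum>j\<in>S. b j) = 1" using card_window root_finite[OF S] by simp
  qed
  ultimately obtain t where t: "t > 0" "\<forall>j\<in>Zn n. real_of_int (a j) = t * real_of_int (b j)"
      "real_of_int \<alpha> = t * real_of_int 1"
    by (rule scalar_multiple[OF cover_Zn])
  then have "(\<forall>j\<in>Zn n. real_of_int (a j) = t * (if j \<in> Cset n k i then 1 else 0)) \<and> real_of_int \<alpha> = t"
    by (simp add: b_def)
  then have "boolean_or_rank n k a \<alpha>"
    unfolding boolean_or_rank_def using t(1) i by blast
  then show False using not_boolean_or_rank by blast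
qed

lemma coeff_nonneg:
  assumes i: "i \<in> Zn n"
  shows "0 \<le> a i"
proof -
  obtain S where S: "is_root n k a \<alpha> S" "i \<notin> S" using exists_root_not_mem[OF i] by blast
  have "is_cover n k (insert i S)" using root_cover[OF S(1)] i by (auto simp: is_cover_def)
  then have "\<alpha> \<le> (\<Sum>j\<in>insert i S. a j)" by (rule cover_sum_ge[OF facet_valid])
  then show ?thesis using S root_finite[OF S(1)] root_sum[OF S(1)] by simp
qed

lemma root_exchange_le:
  assumes S: "is_root n k a \<alpha> S" "i \<in> S" and x: "x \<in> Zn n"
    and windows: "\<forall>s\<in>Zn n. i \<in> Cset n k s \<longrightarrow> Cset n k s \<inter> insert x (S - {i}) \<noteq> {}"
  shows "a i \<le> a x"
proof -
  have "is_cover n k (insert x (S - {i}))"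
    using is_cover_replace[OF root_cover[OF S(1)] _ _ windows] root_subset[OF S(1)] x by blast
  then have "\<alpha> \<le> (\<Sum>j\<in>insert x (S - {i}). a j)" by (rule cover_sum_ge[OF facet_valid])
  also have "\<dots> \<le> a x + (\<Sum>j\<in>S - {i}. a j)"
    using root_finite[OF S(1)] coeff_nonneg[OF x] by (simp add: sum.insert_if)
  also have "\<dots> = a x + \<alpha> - a i"
    using root_finite[OF S(1)] S root_sum by (simp add: sum_diff1)
  finally show ?thesis by simp
qed

lemma root_delete:
  assumes S: "is_root n k a \<alpha> S" "p \<in> S"
    and windows: "\<forall>s\<in>Zn n. p \<in> Cset n k s \<longrightarrow> Cset n k s \<inter> (S - {p}) \<noteq> {}"
  shows "is_root n k a \<alpha> (S - {p})"
proof -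
  have cover: "is_cover n k (S - {p})"
    using is_cover_replace[OF root_cover[OF S(1)] _ _ windows] root_subset[OF S(1)] by blast
  have sum: "(\<Sum>j\<in>S - {p}. a j) = \<alpha> - a p"
    using root_finite[OF S(1)] S root_sum by (simp add: sum_diff1)
  have "\<alpha> \<le> \<alpha> - a p" using cover_sum_ge[OF facet_valid cover] sum by simp
  moreover have "0 \<le> a p" using coeff_nonneg root_subset[OF S(1)] S(2) by blast
  ultimately show ?thesis using cover sum by (simp add: is_root_def)
qed

text \<open>Of three points of a root in one window, the middle one (in cyclic order from the
  window's start) is redundant: every window containing it contains one of the other two.\<close>
lemma root_window_card_decrease:
  assumes S: "is_root n k a \<alpha> S" and i: "i \<in> Zn n" and card: "3 \<le> card (S \<inter> Cset n k i)"
  obtains p where "p \<in> S \<inter> Cset n k i" "is_root n k a \<alpha> (S - {p})"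
proof -
  let ?C = "Cset n k i" and ?off = "\<lambda>x. (x - i) mod n"
  have "inj_on ?off (S \<inter> ?C)"
    by (rule inj_on_subset[OF inj_on_mod_diff]) (use root_subset[OF S] in blast)
  then have "3 \<le> card (?off ` (S \<inter> ?C))" using card by (simp add: card_image)
  then obtain o1 o2 o3 where "o1 \<in> ?off ` (S \<inter> ?C)" "o2 \<in> ?off ` (S \<inter> ?C)" "o3 \<in> ?off ` (S \<inter> ?C)"
      "o1 < o2" "o2 < o3"
    using card_ge_3_obtain[of "?off ` (S \<inter> ?C)"] root_finite[OF S] by blast
  then obtain p1 p2 p3 where p: "p1 \<in> S" "p2 \<in> S \<inter> ?C" "p3 \<in> S \<inter> ?C"
      "?off p1 < ?off p2" "?off p2 < ?off p3"
    by blast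
  have "\<forall>s\<in>Zn n. p2 \<in> Cset n k s \<longrightarrow> Cset n k s \<inter> (S - {p2}) \<noteq> {}"
  proof (intro ballI impI)
    fix s assume "p2 \<in> Cset n k s"
    then have "p1 \<in> Cset n k s \<or> p3 \<in> Cset n k s"
      using Cset_between[OF n_pos less_imp_le[OF k_less] p(4,5)] p root_subset[OF S] by blast
    then show "Cset n k s \<inter> (S - {p2}) \<noteq> {}" using p by auto
  qed
  then show ?thesis using that p(2) root_delete[OF S] by blast
qed

lemma exists_root_window_card_2:
  assumes i: "i \<in> Zn n"
  shows "\<exists>S. is_root n k a \<alpha> S \<and> card (S \<inter> Cset n k i) = 2"
proof -
  have "\<exists>S'. is_root n k a \<alpha> S' \<and> card (S' \<inter> Cset n k i) = 2"
    if "is_root n k a \<alpha> S" "2 \<le> card (S \<inter> Cset n k i)" for S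
    using that
  proof (induction "card (S \<inter> Cset n k i)" arbitrary: S rule: less_induct)
    case less
    show ?case
    proof (cases "card (S \<inter> Cset n k i) = 2")
      case False
      then obtain p where p: "p \<in> S \<inter> Cset n k i" "is_root n k a \<alpha> (S - {p})"
        using root_window_card_decrease[OF less.prems(1) i] less.prems(2) by force
      have "(S - {p}) \<inter> Cset n k i = (S \<inter> Cset n k i) - {p}" by blast
      then have "card ((S - {p}) \<inter> Cset n k i) = card (S \<inter> Cset n k i) - 1"
        using p(1) root_finite[OF less.prems(1)] by simp
      then show ?thesis using less.hyps[OF _ p(2)] less.prems(2) False by simp
    qed (use less.prems in blast)
  qed
  then show ?thesis using exists_root_window_card_ge_2[OF i] by blast
qed

lemma root_exchange_right:
  assumes S: "is_root n k a \<alpha> S" "i \<in> S" "j \<in> S" "j \<noteq> i"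
    and j: "j \<in> Cset n k ((i - k + 1) mod n)" and x: "x \<in> cint n i ((j + k) mod n)"
  shows "a i \<le> a x"
proof (rule root_exchange_le[OF S(1,2)])
  show "x \<in> Zn n" using x n_pos by (simp add: cint_mem)
  have ij: "i \<in> Zn n" "j \<in> Zn n" using S root_subset by blast+
  show "\<forall>s\<in>Zn n. i \<in> Cset n k s \<longrightarrow> Cset n k s \<inter> insert x (S - {i}) \<noteq> {}"
  proof (intro ballI impI)
    fix s assume "i \<in> Cset n k s"
    then have "j \<in> Cset n k s \<or> x \<in> Cset n k s"
      using Cset_exchange_right[OF n_pos _ k_less ij S(4) j x \<open>i \<in> Cset n k s\<close>] k_ge_2 by simp
    then show "Cset n k s \<inter> insert x (S - {i}) \<noteq> {}" using S(3,4) by blast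
  qed
qed

lemma root_exchange_left:
  assumes S: "is_root n k a \<alpha> S" "i \<in> S" "j \<in> S" "j \<noteq> i"
    and j: "j \<in> Cset n k i" and x: "x \<in> cint n ((j - k) mod n) i"
  shows "a i \<le> a x"
proof (rule root_exchange_le[OF S(1,2)])
  show "x \<in> Zn n" using x n_pos by (simp add: cint_mem)
  have ij: "i \<in> Zn n" "j \<in> Zn n" using S root_subset by blast+
  show "\<forall>s\<in>Zn n. i \<in> Cset n k s \<longrightarrow> Cset n k s \<inter> insert x (S - {i}) \<noteq> {}"
  proof (intro ballI impI)
    fix s assume "i \<in> Cset n k s"
    then have "j \<in> Cset n k s \<or> x \<in> Cset n k s"
      using Cset_exchange_left[OF n_pos k_less ij S(4) j x \<open>i \<in> Cset n k s\<close>] by simp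
    then show "Cset n k s \<inter> insert x (S - {i}) \<noteq> {}" using S(3,4) by blast
  qed
qed

end

theorem mainTheorem1:
  fixes n k \<alpha> :: int and a :: "int \<Rightarrow> int"
  assumes "1 \<le> k" and "k \<le> n - 1"
    and "facet_defining n k a \<alpha>"
    and "\<not> boolean_or_rank n k a \<alpha>"
  defines "a0 \<equiv> Min (a ` Zn n)"
  defines "W \<equiv> {i\<in>Zn n. a i > a0}"
  shows "(\<forall>i\<in>Zn n.
            (\<exists>S. is_root n k a \<alpha> S \<and> i \<in> S) \<and>
            (\<exists>S. is_root n k a \<alpha> S \<and> i \<notin> S) \<and>
            (\<exists>S. is_root n k a \<alpha> S \<and> card (S \<inter> Cset n k i) = 2))
       \<and> (\<forall>i\<in>W. \<forall>S. is_root n k a \<alpha> S \<and> i \<in> S \<longrightarrow>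
            (\<forall>j. j \<noteq> i \<and> j \<in> S \<inter> Cset n k ((i - k + 1) mod n) \<longrightarrow> cint n i ((j + k) mod n) \<subseteq> W) \<and>
            (\<forall>j. j \<noteq> i \<and> j \<in> S \<inter> Cset n k i \<longrightarrow> cint n ((j - k) mod n) i \<subseteq> W))"
proof -
  interpret nontrivial_cover_facet n k a \<alpha>
    using assms(1-4) facet_defining_k_ge_2 by unfold_locales auto
  have above_W: "x \<in> W" if "i \<in> W" "x \<in> Zn n" "a i \<le> a x" for i x
    using that by (auto simp: W_def)
  have cint_Zn: "cint n i j \<subseteq> Zn n" for i j
    using n_pos by (auto simp: cint_mem)
  show ?thesis
    using exists_root_mem exists_root_not_mem exists_root_window_card_2
      root_exchange_right root_exchange_left above_W cint_Zn
    by (intro conjI ballI allI impI subsetI) blast+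
qed

end
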